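(* Let $(X,\mathscr{A},\mu)$ be a $\sigma$-finite measure space and $\phi$ a nonsingular transformation of $X$ such that $\mathsf{h}_\phi<\infty$ a.e. $[\mu]$. Then the following are equivalent: (i) $\mathsf{E}(\mathsf{h}_{\phi^n})=\mathsf{h}_{\phi^n}$ a.e. $[\mu]$ for all $n\in\mathbb{N}$; (ii) $\mathsf{h}_{\phi^{n+1}}\circ\phi=\mathsf{h}_\phi\circ\phi\cdot\mathsf{h}_{\phi^n}$ a.e. $[\mu]$ for all $n\in\mathbb{N}$. Moreover, if (i) holds, then: (iii) $\mathsf{h}_{\phi^{m+n}}\circ\phi^n=\mathsf{h}_\phi\circ\phi\cdots\mathsf{h}_\phi\circ\phi^n\cdot\mathsf{h}_{\phi^m}$ a.e. $[\mu]$ for all $m\in\mathbb{Z}_+$, $n\in\mathbb{N}$; (iv) $\mathsf{h}_{\phi^{m+n}}\circ\phi^n=\mathsf{h}_{\phi^n}\circ\phi^n\cdot\mathsf{h}_{\phi^m}$ a.e. $[\mu]$ for all $m\in\mathbb{Z}_+$, $n\in\mathbb{N}$; (v) $\mathsf{h}_{\phi^n}\circ\phi^n=\mathsf{h}_\phi\circ\phi\cdots\mathsf{h}_\phi\circ\phi^n$ a.e. $[\mu]$ for all $n\in\mathbb{N}$; (vi) $\mathsf{h}_{\phi^{n+1}}\circ\phi^n=\mathsf{h}_\phi\circ\phi^0\cdots\mathsf{h}_\phi\circ\phi^n$ a.e. $[\mu]$ for all $n\in\mathbb{Z}_+$.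
   Context: $\mathbb{N}=\{1,2,\dots\}$, $\mathbb{Z}_+=\{0,1,\dots\}$. Conventions: $0\cdot\infty=0$, $1/0=\infty$, $0/0=1$. Nonsingular: $\phi^{-1}(\Delta)\in\mathscr{A}$ for $\Delta\in\mathscr{A}$ and $\mu(\phi^{-1}(\Delta))=0$ when $\mu(\Delta)=0$. $\phi^n$ is the $n$-fold composition ($\phi^0=\mathrm{id}_X$), $\mathsf{h}_{\phi^n}$ the Radon–Nikodym derivative of $\mu\circ(\phi^n)^{-1}$ w.r.t. $\mu$. $\mathsf{E}(f)$ is the conditional expectation of an $\mathscr{A}$-measurable $f\colon X\to[0,\infty]$ w.r.t. $\phi^{-1}(\mathscr{A})$: the a.e. unique $\phi^{-1}(\mathscr{A})$-measurable function with $\int(g\circ\phi)f\,\mathrm{d}\mu=\int(g\circ\phi)\mathsf{E}(f)\,\mathrm{d}\mu$ for all $\mathscr{A}$-measurable $g\ge0$. *)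

theory Defs
  imports "HOL-Analysis.Analysis"
begin

definition nonsingular :: "'a measure \<Rightarrow> ('a \<Rightarrow> 'a) \<Rightarrow> bool" where
  "nonsingular M \<phi> \<longleftrightarrow> \<phi> \<in> M \<rightarrow>\<^sub>M M \<and>
     (\<forall>A\<in>sets M. emeasure M A = 0 \<longrightarrow> emeasure M (\<phi> -` A \<inter> space M) = 0)"

definition hphi :: "'a measure \<Rightarrow> ('a \<Rightarrow> 'a) \<Rightarrow> nat \<Rightarrow> 'a \<Rightarrow> ennreal" where
  "hphi M \<phi> n = RN_deriv M (distr M M (\<phi> ^^ n))"

definition is_cond_exp :: "'a measure \<Rightarrow> ('a \<Rightarrow> 'a) \<Rightarrow> ('a \<Rightarrow> ennreal) \<Rightarrow> ('a \<Rightarrow> ennreal) \<Rightarrow> bool" where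
  "is_cond_exp M \<phi> f g \<longleftrightarrow> g \<in> borel_measurable (vimage_algebra (space M) \<phi> M) \<and>
     (\<forall>u\<in>borel_measurable M. (\<integral>\<^sup>+ x. u (\<phi> x) * f x \<partial>M) = (\<integral>\<^sup>+ x. u (\<phi> x) * g x \<partial>M))"

end

theory Submission
  imports Defs
begin

text \<open>
  Write \<open>h\<^sub>n\<close> for \<open>hphi M \<phi> n\<close>. Change of variables gives
  \<open>\<integral> h\<^sub>n \<cdot> (v \<circ> \<phi>) = \<integral> h\<^sub>n\<^sub>+\<^sub>1 \<cdot> v\<close>. If \<open>h\<^sub>n\<close> is \<open>\<phi>\<^sup>-\<^sup>1(\<A>)\<close>-measurable, i.e. \<open>h\<^sub>n = k \<circ> \<phi>\<close>
  (Doob--Dynkin), the left-hand side is \<open>\<integral> h\<^sub>1 \<cdot> k \<cdot> v\<close>, so \<open>h\<^sub>n\<^sub>+\<^sub>1 = h\<^sub>1 \<cdot> k\<close> by uniqueness of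
  Radon--Nikodym derivatives; composing with \<open>\<phi>\<close> yields (ii). Conversely (ii) exhibits \<open>h\<^sub>n\<close>
  a.e. as \<open>(h\<^sub>n\<^sub>+\<^sub>1 / h\<^sub>1) \<circ> \<phi>\<close>, since \<open>h\<^sub>1 \<circ> \<phi>\<close> is a.e. positive and finite, and a
  \<open>\<phi>\<^sup>-\<^sup>1(\<A>)\<close>-measurable function is its own conditional expectation. Iterating (ii) along
  \<open>\<phi>\<^sup>n\<close>, which preserves null sets, gives (iii); (v) and (vi) are its cases \<open>m = 0\<close> and
  \<open>m = 1\<close>, and (iv) combines (iii) with (v).
\<close>

lemma nonsingular_measurable: "nonsingular M \<phi> \<Longrightarrow> \<phi> \<in> M \<rightarrow>\<^sub>M M"
  by (simp add: nonsingular_def)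

lemma AE_nonsingular_comp:
  assumes "nonsingular M \<phi>" and "AE x in M. P x"
  shows "AE x in M. P (\<phi> x)"
proof -
  from assms(2) obtain N where N: "{x\<in>space M. \<not> P x} \<subseteq> N" "N \<in> null_sets M"
    unfolding eventually_ae_filter by auto
  have \<phi>: "\<phi> \<in> M \<rightarrow>\<^sub>M M"
    using assms(1) by (rule nonsingular_measurable)
  have "\<phi> -` N \<inter> space M \<in> null_sets M"
    using assms(1) N(2) measurable_sets[OF \<phi>] by (auto simp: nonsingular_def null_sets_def)
  moreover have "{x\<in>space M. \<not> P (\<phi> x)} \<subseteq> \<phi> -` N \<inter> space M"
    using N(1) measurable_space[OF \<phi>] by auto
  ultimately show ?thesis
    by (rule AE_I')
qed

lemma nonsingular_comp:
  assumes "nonsingular M \<phi>" and "nonsingular M \<psi>"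
  shows "nonsingular M (\<phi> \<circ> \<psi>)"
proof -
  have meas: "\<phi> \<circ> \<psi> \<in> M \<rightarrow>\<^sub>M M"
    using assms by (auto intro: measurable_comp simp: nonsingular_def)
  have "(\<phi> \<circ> \<psi>) -` A \<inter> space M \<in> null_sets M" if "A \<in> null_sets M" for A
  proof -
    have "AE x in M. x \<notin> A"
      using that by (rule AE_not_in)
    then have "AE x in M. \<phi> (\<psi> x) \<notin> A"
      by (intro AE_nonsingular_comp[OF assms(2)] AE_nonsingular_comp[OF assms(1)])
    then have "AE x in M. x \<notin> (\<phi> \<circ> \<psi>) -` A \<inter> space M"
      by eventually_elim auto
    then show ?thesis
      using measurable_sets[OF meas null_setsD2[OF that]] by (simp add: AE_iff_null_sets)
  qed
  with meas show ?thesis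
    by (auto simp: nonsingular_def null_sets_def)
qed

lemma nonsingular_funpow: "nonsingular M \<phi> \<Longrightarrow> nonsingular M (\<phi> ^^ n)"
proof (induction n)
  case 0
  then show ?case
    by (simp add: nonsingular_def id_def)
next
  case (Suc n)
  then show ?case
    using nonsingular_comp[of M \<phi> "\<phi> ^^ n"] by (simp add: comp_def)
qed

lemma absolutely_continuous_distr_nonsingular:
  assumes "nonsingular M \<phi>"
  shows "absolutely_continuous M (distr M M \<phi>)"
  unfolding absolutely_continuous_def
proof
  fix A assume A: "A \<in> null_sets M"
  then show "A \<in> null_sets (distr M M \<phi>)"
    using assms by (auto simp: nonsingular_def null_sets_def emeasure_distr)
qed

lemma borel_measurable_hphi[measurable]: "hphi M \<phi> n \<in> borel_measurable M"
  unfolding hphi_def by simp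

lemma density_hphi:
  assumes "sigma_finite_measure M" and "nonsingular M \<phi>"
  shows "density M (hphi M \<phi> n) = distr M M (\<phi> ^^ n)"
  unfolding hphi_def
  using assms by (intro sigma_finite_measure.density_RN_deriv
      absolutely_continuous_distr_nonsingular nonsingular_funpow) simp_all

lemma AE_hphi_0:
  assumes "sigma_finite_measure M"
  shows "AE x in M. hphi M \<phi> 0 x = 1"
proof -
  have "density M (\<lambda>_. 1) = distr M M (\<phi> ^^ 0)"
    by (simp add: density_1 id_def)
  then have "AE x in M. 1 = RN_deriv M (distr M M (\<phi> ^^ 0)) x"
    using assms by (intro sigma_finite_measure.RN_deriv_unique) auto
  then show ?thesis
    by (auto simp: hphi_def)
qed

lemma nn_integral_funpow_eq_hphi:
  assumes "sigma_finite_measure M" and "nonsingular M \<phi>" and "v \<in> borel_measurable M"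
  shows "(\<integral>\<^sup>+x. v ((\<phi> ^^ n) x) \<partial>M) = (\<integral>\<^sup>+x. hphi M \<phi> n x * v x \<partial>M)"
proof -
  have "(\<phi> ^^ n) \<in> M \<rightarrow>\<^sub>M M"
    using assms(2) by (intro nonsingular_measurable nonsingular_funpow)
  then have "(\<integral>\<^sup>+x. v ((\<phi> ^^ n) x) \<partial>M) = integral\<^sup>N (distr M M (\<phi> ^^ n)) v"
    using assms(3) by (simp add: nn_integral_distr)
  also have "\<dots> = integral\<^sup>N (density M (hphi M \<phi> n)) v"
    using assms(1,2) by (simp add: density_hphi)
  also have "\<dots> = (\<integral>\<^sup>+x. hphi M \<phi> n x * v x \<partial>M)"
    using assms(3) by (simp add: nn_integral_density)
  finally show ?thesis .
qed

lemma nn_integral_hphi_mult_funpow: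
  assumes "sigma_finite_measure M" and "nonsingular M \<phi>" and "v \<in> borel_measurable M"
  shows "(\<integral>\<^sup>+x. hphi M \<phi> n x * v ((\<phi> ^^ m) x) \<partial>M) = (\<integral>\<^sup>+x. hphi M \<phi> (m + n) x * v x \<partial>M)"
proof -
  have v_funpow: "(\<lambda>x. v ((\<phi> ^^ m) x)) \<in> borel_measurable M"
    using nonsingular_measurable[OF nonsingular_funpow[OF assms(2)]] assms(3)
    by (rule measurable_compose)
  have "(\<integral>\<^sup>+x. hphi M \<phi> n x * v ((\<phi> ^^ m) x) \<partial>M) = (\<integral>\<^sup>+x. v ((\<phi> ^^ m) ((\<phi> ^^ n) x)) \<partial>M)"
    using nn_integral_funpow_eq_hphi[OF assms(1,2) v_funpow, of n] by simp
  also have "\<dots> = (\<integral>\<^sup>+x. v ((\<phi> ^^ (m + n)) x) \<partial>M)"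
    by (simp add: funpow_add)
  also have "\<dots> = (\<integral>\<^sup>+x. hphi M \<phi> (m + n) x * v x \<partial>M)"
    by (rule nn_integral_funpow_eq_hphi[OF assms])
  finally show ?thesis .
qed

lemma vimage_algebra_measurable_factor:
  fixes g :: "'a \<Rightarrow> ennreal"
  assumes f: "f \<in> X \<rightarrow> space N" and g: "g \<in> borel_measurable (vimage_algebra X f N)"
  shows "\<exists>k\<in>borel_measurable N. \<forall>x\<in>X. g x = k (f x)"
  using g
proof (induction rule: borel_measurable_induct)
  case (cong g g')
  then show ?case
    by simp
next
  case (set A)
  then obtain B where "B \<in> sets N" "A = f -` B \<inter> X"
    using sets_vimage_algebra2[OF f] by auto
  then show ?case
    by (intro bexI[of _ "indicator B"]) (auto split: split_indicator)
next
  case (mult u c)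
  then obtain k where "k \<in> borel_measurable N" "\<forall>x\<in>X. u x = k (f x)"
    by blast
  then show ?case
    by (intro bexI[of _ "\<lambda>y. c * k y"]) auto
next
  case (add u v)
  then obtain k l where "k \<in> borel_measurable N" "\<forall>x\<in>X. u x = k (f x)"
    and "l \<in> borel_measurable N" "\<forall>x\<in>X. v x = l (f x)"
    by blast
  then show ?case
    by (intro bexI[of _ "\<lambda>y. l y + k y"]) auto
next
  case (seq U)
  then obtain K where "\<And>i. K i \<in> borel_measurable N" "\<And>i x. x \<in> X \<Longrightarrow> U i x = K i (f x)"
    by metis
  then show ?case
    by (intro bexI[of _ "\<lambda>y. SUP i. K i y"]) (auto simp: image_comp)
qed

lemma AE_hphi_Suc_eq:
  assumes sf: "sigma_finite_measure M" and ns: "nonsingular M \<phi>"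
    and k: "k \<in> borel_measurable M" and hk: "AE x in M. hphi M \<phi> n x = k (\<phi> x)"
  shows "AE x in M. hphi M \<phi> 1 x * k x = hphi M \<phi> (n + 1) x"
proof -
  have "density M (\<lambda>x. hphi M \<phi> 1 x * k x) = distr M M (\<phi> ^^ (n + 1))"
  proof (rule measure_eqI)
    fix A assume "A \<in> sets (density M (\<lambda>x. hphi M \<phi> 1 x * k x))"
    then have A: "A \<in> sets M"
      by simp
    have "emeasure (density M (\<lambda>x. hphi M \<phi> 1 x * k x)) A
        = (\<integral>\<^sup>+x. hphi M \<phi> 1 x * (k x * indicator A x) \<partial>M)"
      using A k by (simp add: emeasure_density mult.assoc)
    also have "\<dots> = (\<integral>\<^sup>+x. k (\<phi> x) * indicator A (\<phi> x) \<partial>M)"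
      using nn_integral_funpow_eq_hphi[OF sf ns, of "\<lambda>x. k x * indicator A x" 1] A k by simp
    also have "\<dots> = (\<integral>\<^sup>+x. hphi M \<phi> n x * indicator A ((\<phi> ^^ 1) x) \<partial>M)"
      using hk by (intro nn_integral_cong_AE) auto
    also have "\<dots> = (\<integral>\<^sup>+x. hphi M \<phi> (n + 1) x * indicator A x \<partial>M)"
      using nn_integral_hphi_mult_funpow[OF sf ns, of "indicator A" n 1] A by (simp add: add.commute)
    also have "\<dots> = emeasure (density M (hphi M \<phi> (n + 1))) A"
      using A by (simp add: emeasure_density)
    also have "\<dots> = emeasure (distr M M (\<phi> ^^ (n + 1))) A"
      by (simp only: density_hphi[OF sf ns])
    finally show "emeasure (density M (\<lambda>x. hphi M \<phi> 1 x * k x)) A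
        = emeasure (distr M M (\<phi> ^^ (n + 1))) A" .
  qed simp
  then show ?thesis
    unfolding hphi_def using k
    by (intro sigma_finite_measure.RN_deriv_unique[OF sf]) (auto simp: hphi_def[symmetric])
qed

lemma AE_hphi_Suc_comp_if_cond_exp:
  assumes sf: "sigma_finite_measure M" and ns: "nonsingular M \<phi>"
    and g: "is_cond_exp M \<phi> (hphi M \<phi> n) g" and hg: "AE x in M. g x = hphi M \<phi> n x"
  shows "AE x in M. hphi M \<phi> (n + 1) (\<phi> x) = hphi M \<phi> 1 (\<phi> x) * hphi M \<phi> n x"
proof -
  have \<phi>: "\<phi> \<in> space M \<rightarrow> space M"
    using measurable_space[OF nonsingular_measurable[OF ns]] by auto
  have "g \<in> borel_measurable (vimage_algebra (space M) \<phi> M)"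
    using g by (simp add: is_cond_exp_def)
  then obtain k where k: "k \<in> borel_measurable M" "\<And>x. x \<in> space M \<Longrightarrow> g x = k (\<phi> x)"
    using vimage_algebra_measurable_factor[OF \<phi>] by metis
  have hk: "AE x in M. hphi M \<phi> n x = k (\<phi> x)"
    using hg AE_space by eventually_elim (simp add: k(2))
  have "AE x in M. hphi M \<phi> 1 (\<phi> x) * k (\<phi> x) = hphi M \<phi> (n + 1) (\<phi> x)"
    by (rule AE_nonsingular_comp[OF ns AE_hphi_Suc_eq[OF sf ns k(1) hk]])
  with hk show ?thesis
    by eventually_elim (simp only:)
qed

lemma AE_hphi_1_comp_neq_0:
  assumes sf: "sigma_finite_measure M" and ns: "nonsingular M \<phi>"
  shows "AE x in M. hphi M \<phi> 1 (\<phi> x) \<noteq> 0"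
proof -
  have "AE x in density M (hphi M \<phi> 1). hphi M \<phi> 1 x \<noteq> 0"
    by (subst AE_density) auto
  moreover have "density M (hphi M \<phi> 1) = distr M M \<phi>"
    using density_hphi[OF sf ns, of 1] by simp
  ultimately have "AE x in distr M M \<phi>. hphi M \<phi> 1 x \<noteq> 0"
    by (simp only:)
  then show ?thesis
    using nonsingular_measurable[OF ns] by (subst (asm) AE_distr_iff) auto
qed

lemma cond_exp_hphi_if_AE_hphi_Suc_comp:
  assumes sf: "sigma_finite_measure M" and ns: "nonsingular M \<phi>"
    and fin: "AE x in M. hphi M \<phi> 1 x < \<infinity>"
    and ii: "AE x in M. hphi M \<phi> (n + 1) (\<phi> x) = hphi M \<phi> 1 (\<phi> x) * hphi M \<phi> n x"
  shows "\<exists>g. is_cond_exp M \<phi> (hphi M \<phi> n) g \<and> (AE x in M. g x = hphi M \<phi> n x)"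
proof -
  define g where "g x = hphi M \<phi> (n + 1) (\<phi> x) / hphi M \<phi> 1 (\<phi> x)" for x
  have \<phi>: "\<phi> \<in> space M \<rightarrow> space M"
    using measurable_space[OF nonsingular_measurable[OF ns]] by auto
  have "g \<in> borel_measurable (vimage_algebra (space M) \<phi> M)"
    unfolding g_def by (rule measurable_compose[OF measurable_vimage_algebra1[OF \<phi>]]) simp
  moreover have hg: "AE x in M. g x = hphi M \<phi> n x"
    using ii AE_hphi_1_comp_neq_0[OF sf ns] AE_nonsingular_comp[OF ns fin]
    by eventually_elim (simp add: g_def ennreal_mult_divide_eq mult.commute)
  ultimately have "is_cond_exp M \<phi> (hphi M \<phi> n) g"
    unfolding is_cond_exp_def by (auto intro!: nn_integral_cong_AE)
  with hg show ?thesis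
    by blast
qed

lemma AE_hphi_add_funpow:
  assumes sf: "sigma_finite_measure M" and ns: "nonsingular M \<phi>"
    and ii: "\<forall>n\<ge>1. AE x in M. hphi M \<phi> (n + 1) (\<phi> x) = hphi M \<phi> 1 (\<phi> x) * hphi M \<phi> n x"
  shows "AE x in M. hphi M \<phi> (m + n) ((\<phi> ^^ n) x)
            = (\<Prod>i\<in>{1..n}. hphi M \<phi> 1 ((\<phi> ^^ i) x)) * hphi M \<phi> m x"
proof (induction n)
  case 0
  then show ?case
    by simp
next
  case (Suc n)
  \<comment> \<open>(ii) is assumed only for \<open>n \<ge> 1\<close>; for \<open>n = 0\<close> it holds because \<open>h\<^sub>0 = 1\<close>\<close>
  have "AE x in M. hphi M \<phi> (m + n + 1) (\<phi> x) = hphi M \<phi> 1 (\<phi> x) * hphi M \<phi> (m + n) x"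
  proof (cases "m + n = 0")
    case True
    show ?thesis
      using AE_hphi_0[OF sf, of \<phi>] by eventually_elim (simp add: True)
  next
    case False
    then have "m + n \<ge> 1"
      by linarith
    with ii show ?thesis
      by simp
  qed
  then have "AE x in M. hphi M \<phi> (m + n + 1) (\<phi> ((\<phi> ^^ n) x))
      = hphi M \<phi> 1 (\<phi> ((\<phi> ^^ n) x)) * hphi M \<phi> (m + n) ((\<phi> ^^ n) x)"
    by (rule AE_nonsingular_comp[OF nonsingular_funpow[OF ns]])
  with Suc.IH show ?case
    by eventually_elim (simp add: prod.nat_ivl_Suc' ac_simps)
qed

lemma AE_hphi_funpow_identities:
  assumes sf: "sigma_finite_measure M" and ns: "nonsingular M \<phi>"
    and ii: "\<forall>n\<ge>1. AE x in M. hphi M \<phi> (n + 1) (\<phi> x) = hphi M \<phi> 1 (\<phi> x) * hphi M \<phi> n x"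
  shows "(\<forall>m n. n \<ge> 1 \<longrightarrow> (AE x in M. hphi M \<phi> (m + n) ((\<phi> ^^ n) x)
            = (\<Prod>i\<in>{1..n}. hphi M \<phi> 1 ((\<phi> ^^ i) x)) * hphi M \<phi> m x))
      \<and> (\<forall>m n. n \<ge> 1 \<longrightarrow> (AE x in M. hphi M \<phi> (m + n) ((\<phi> ^^ n) x)
            = hphi M \<phi> n ((\<phi> ^^ n) x) * hphi M \<phi> m x))
      \<and> (\<forall>n\<ge>1. AE x in M. hphi M \<phi> n ((\<phi> ^^ n) x) = (\<Prod>i\<in>{1..n}. hphi M \<phi> 1 ((\<phi> ^^ i) x)))
      \<and> (\<forall>n. AE x in M. hphi M \<phi> (n + 1) ((\<phi> ^^ n) x) = (\<Prod>i\<in>{0..n}. hphi M \<phi> 1 ((\<phi> ^^ i) x)))"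
proof -
  note iii = AE_hphi_add_funpow[OF sf ns ii]
  have v: "AE x in M. hphi M \<phi> n ((\<phi> ^^ n) x) = (\<Prod>i\<in>{1..n}. hphi M \<phi> 1 ((\<phi> ^^ i) x))" for n
    using iii[of 0 n] AE_hphi_0[OF sf, of \<phi>] by eventually_elim simp
  have iv: "AE x in M. hphi M \<phi> (m + n) ((\<phi> ^^ n) x) = hphi M \<phi> n ((\<phi> ^^ n) x) * hphi M \<phi> m x"
    for m n
    using iii[of m n] v[of n] by eventually_elim simp
  have vi: "AE x in M. hphi M \<phi> (n + 1) ((\<phi> ^^ n) x) = (\<Prod>i\<in>{0..n}. hphi M \<phi> 1 ((\<phi> ^^ i) x))"
    for n
    using iii[of 1 n]
    by eventually_elim (simp add: prod.atLeast_Suc_atMost mult.commute add.commute del: funpow.simps)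
  show ?thesis
    using iii iv v vi by blast
qed

theorem proposition26:
  fixes M :: "'a measure" and \<phi> :: "'a \<Rightarrow> 'a"
  assumes "sigma_finite_measure M"
    and "nonsingular M \<phi>"
    and "AE x in M. hphi M \<phi> 1 x < \<infinity>"
  shows "((\<forall>n\<ge>1. \<exists>g. is_cond_exp M \<phi> (hphi M \<phi> n) g \<and> (AE x in M. g x = hphi M \<phi> n x))
          \<longleftrightarrow> (\<forall>n\<ge>1. AE x in M. hphi M \<phi> (n + 1) (\<phi> x) = hphi M \<phi> 1 (\<phi> x) * hphi M \<phi> n x))
    \<and> ((\<forall>n\<ge>1. \<exists>g. is_cond_exp M \<phi> (hphi M \<phi> n) g \<and> (AE x in M. g x = hphi M \<phi> n x)) \<longrightarrow>
        (\<forall>m n. n \<ge> 1 \<longrightarrow> (AE x in M. hphi M \<phi> (m + n) ((\<phi> ^^ n) x)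
            = (\<Prod>i\<in>{1..n}. hphi M \<phi> 1 ((\<phi> ^^ i) x)) * hphi M \<phi> m x))
      \<and> (\<forall>m n. n \<ge> 1 \<longrightarrow> (AE x in M. hphi M \<phi> (m + n) ((\<phi> ^^ n) x)
            = hphi M \<phi> n ((\<phi> ^^ n) x) * hphi M \<phi> m x))
      \<and> (\<forall>n\<ge>1. AE x in M. hphi M \<phi> n ((\<phi> ^^ n) x) = (\<Prod>i\<in>{1..n}. hphi M \<phi> 1 ((\<phi> ^^ i) x)))
      \<and> (\<forall>n. AE x in M. hphi M \<phi> (n + 1) ((\<phi> ^^ n) x) = (\<Prod>i\<in>{0..n}. hphi M \<phi> 1 ((\<phi> ^^ i) x))))"
proof -
  note sf = assms(1) and ns = assms(2)
  have I_iff_II: "(\<forall>n\<ge>1. \<exists>g. is_cond_exp M \<phi> (hphi M \<phi> n) g \<and> (AE x in M. g x = hphi M \<phi> n x))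
      \<longleftrightarrow> (\<forall>n\<ge>1. AE x in M. hphi M \<phi> (n + 1) (\<phi> x) = hphi M \<phi> 1 (\<phi> x) * hphi M \<phi> n x)"
    using AE_hphi_Suc_comp_if_cond_exp[OF sf ns]
      cond_exp_hphi_if_AE_hphi_Suc_comp[OF sf ns assms(3)] by blast
  show ?thesis
    by (rule conjI[OF I_iff_II impI[OF AE_hphi_funpow_identities[OF sf ns iffD1[OF I_iff_II]]]])
qed

end
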